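(* Let $\mathsf V=(\mathsf V,\otimes,k)$ be a quantale in which $k=\top$ is the top element, and assume there is a sequence $(u_n)_{n\in\mathbb N}$ in $\mathsf V$ such that $\bigvee_{n\in\mathbb N}u_n=k$, $u_n\ll k$ for all $n$, and $u_n\le u_{n+1}$ for all $n$. Let $X=(X,a)$ be a $\mathsf V$-category. Then for every adjunction $\varphi\dashv\psi$ with $\varphi:E\rightharpoonup X$ and $\psi:X\rightharpoonup E$ there is a Cauchy sequence $s$ in $X$ with $\varphi=\varphi_s$ and $\psi=\psi_s$. Consequently, $X$ is Cauchy complete if and only if every Cauchy sequence in $X$ converges.
   Context: A quantale $\mathsf V=(\mathsf V,\otimes,k)$ is a complete anti-symmetric lattice with an associative, commutative binary operation $\otimes$ with neutral element $k$ such that $u\otimes\bigvee_{i}v_i=\bigvee_i(u\otimes v_i)$ for all families; $\hom(u,-)$ denotes the right adjoint of $u\otimes-$. For $u,x\in\mathsf V$, $u\ll x$ ($u$ is totally below $x$) means: for every $S\subseteq\mathsf V$ with $x\le\bigvee S$ there is $s\in S$ with $u\le s$. A $\mathsf V$-category $X=(X,a)$ is a set with $a:X\times X\to\mathsf V$ such that $k\le a(x,x)$ and $a(x,y)\otimes a(y,z)\le a(x,z)$. A $\mathsf V$-module $\varphi:(X,a)\rightharpoonup(Y,b)$ is a map $\varphi:X\times Y\to\mathsf V$ with $a(x,x')\otimes\varphi(x',y)\le\varphi(x,y)$ and $\varphi(x,y)\otimes b(y,y')\le\varphi(x,y')$; composition is $(\psi\cdot\varphi)(x,z)=\bigvee_{y}\varphi(x,y)\otimes\psi(y,z)$,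 modules are ordered pointwise, and $\varphi\dashv\psi$ (for $\psi:Y\rightharpoonup X$) means $a\le\psi\cdot\varphi$ and $\varphi\cdot\psi\le b$. $E=(\{\star\},k)$ is the one-point $\mathsf V$-category with $k(\star,\star)=k$; modules $E\rightharpoonup X$ and $X\rightharpoonup E$ are identified with maps $X\to\mathsf V$. For $x\in X$, $x_*:E\rightharpoonup X$ is $y\mapsto a(x,y)$ and $x^*:X\rightharpoonup E$ is $y\mapsto a(y,x)$. $X$ is Cauchy complete if every left adjoint module $\varphi:E\rightharpoonup X$ is of the form $x_*$ for some $x\in X$. For a sequence $s=(x_n)$ in $X$, $\mathrm{Cauchy}(s)=\bigvee_{N}\bigwedge_{n,m\ge N}a(x_n,x_m)$, and $s$ is Cauchy if $k\le\mathrm{Cauchy}(s)$; $\varphi_s(x)=\bigvee_N\bigwedge_{n\ge N}a(x_n,x)$ and $\psi_s(x)=\bigvee_N\bigwedge_{n\ge N}a(x,x_n)$. For $M\subseteq X$, the closure is $\overline M=\{x\in X\mid k\le\bigvee_{y\in M}a(x,y)\otimes a(y,x)\}$; a sequence $s$ converges to $x$ if $x\in\overline{\{x_n\mid n\in M\}}$ for every infinite $M\subseteq\mathbb N$. *)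

theory Defs
  imports Main
begin

definition quantale :: "('v::complete_lattice \<Rightarrow> 'v \<Rightarrow> 'v) \<Rightarrow> 'v \<Rightarrow> bool" where
  "quantale t k \<longleftrightarrow>
     (\<forall>u v w. t (t u v) w = t u (t v w)) \<and>
     (\<forall>u v. t u v = t v u) \<and>
     (\<forall>u. t k u = u) \<and>
     (\<forall>u S. t u (Sup S) = Sup (t u ` S))"

definition totally_below :: "'v::complete_lattice \<Rightarrow> 'v \<Rightarrow> bool" where
  "totally_below u x \<longleftrightarrow> (\<forall>S. x \<le> Sup S \<longrightarrow> (\<exists>s\<in>S. u \<le> s))"

definition vcat :: "('v::complete_lattice \<Rightarrow> 'v \<Rightarrow> 'v) \<Rightarrow> 'v \<Rightarrow> 'x set \<Rightarrow> ('x \<Rightarrow> 'x \<Rightarrow> 'v) \<Rightarrow> bool" where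
  "vcat t k X a \<longleftrightarrow> (\<forall>x\<in>X. k \<le> a x x) \<and>
     (\<forall>x\<in>X. \<forall>y\<in>X. \<forall>z\<in>X. t (a x y) (a y z) \<le> a x z)"

text \<open>A V-module E \<rightharpoonup> X, identified with a map X \<rightarrow> V.\<close>
definition module_from_E :: "('v::complete_lattice \<Rightarrow> 'v \<Rightarrow> 'v) \<Rightarrow> 'v \<Rightarrow> 'x set \<Rightarrow> ('x \<Rightarrow> 'x \<Rightarrow> 'v) \<Rightarrow> ('x \<Rightarrow> 'v) \<Rightarrow> bool" where
  "module_from_E t k X a phi \<longleftrightarrow> (\<forall>y\<in>X. t k (phi y) \<le> phi y) \<and>
     (\<forall>y\<in>X. \<forall>y'\<in>X. t (phi y) (a y y') \<le> phi y')"

text \<open>A V-module X \<rightharpoonup> E, identified with a map X \<rightarrow> V.\<close>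
definition module_to_E :: "('v::complete_lattice \<Rightarrow> 'v \<Rightarrow> 'v) \<Rightarrow> 'v \<Rightarrow> 'x set \<Rightarrow> ('x \<Rightarrow> 'x \<Rightarrow> 'v) \<Rightarrow> ('x \<Rightarrow> 'v) \<Rightarrow> bool" where
  "module_to_E t k X a psi \<longleftrightarrow> (\<forall>x\<in>X. \<forall>x'\<in>X. t (a x x') (psi x') \<le> psi x) \<and>
     (\<forall>x\<in>X. t (psi x) k \<le> psi x)"

text \<open>Adjunction phi \<stileturn> psi of modules phi : E \<rightharpoonup> X and psi : X \<rightharpoonup> E:
  k \<le> psi \<cdot> phi and phi \<cdot> psi \<le> a.\<close>
definition adjoint :: "('v::complete_lattice \<Rightarrow> 'v \<Rightarrow> 'v) \<Rightarrow> 'v \<Rightarrow> 'x set \<Rightarrow> ('x \<Rightarrow> 'x \<Rightarrow> 'v) \<Rightarrow> ('x \<Rightarrow> 'v) \<Rightarrow> ('x \<Rightarrow> 'v) \<Rightarrow> bool" where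
  "adjoint t k X a phi psi \<longleftrightarrow>
     module_from_E t k X a phi \<and> module_to_E t k X a psi \<and>
     k \<le> (SUP y\<in>X. t (phi y) (psi y)) \<and>
     (\<forall>x\<in>X. \<forall>y\<in>X. t (psi x) (phi y) \<le> a x y)"

definition cauchy_complete :: "('v::complete_lattice \<Rightarrow> 'v \<Rightarrow> 'v) \<Rightarrow> 'v \<Rightarrow> 'x set \<Rightarrow> ('x \<Rightarrow> 'x \<Rightarrow> 'v) \<Rightarrow> bool" where
  "cauchy_complete t k X a \<longleftrightarrow>
     (\<forall>phi. (\<exists>psi. adjoint t k X a phi psi) \<longrightarrow> (\<exists>x\<in>X. \<forall>y\<in>X. phi y = a x y))"

definition cauchy_val :: "('x \<Rightarrow> 'x \<Rightarrow> 'v::complete_lattice) \<Rightarrow> (nat \<Rightarrow> 'x) \<Rightarrow> 'v" where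
  "cauchy_val a s = (SUP N. INF p\<in>{(n, m). N \<le> n \<and> N \<le> m}. a (s (fst p)) (s (snd p)))"

definition is_cauchy :: "'v::complete_lattice \<Rightarrow> ('x \<Rightarrow> 'x \<Rightarrow> 'v) \<Rightarrow> (nat \<Rightarrow> 'x) \<Rightarrow> bool" where
  "is_cauchy k a s \<longleftrightarrow> k \<le> cauchy_val a s"

definition phi_seq :: "('x \<Rightarrow> 'x \<Rightarrow> 'v::complete_lattice) \<Rightarrow> (nat \<Rightarrow> 'x) \<Rightarrow> 'x \<Rightarrow> 'v" where
  "phi_seq a s x = (SUP N. INF n\<in>{N..}. a (s n) x)"

definition psi_seq :: "('x \<Rightarrow> 'x \<Rightarrow> 'v::complete_lattice) \<Rightarrow> (nat \<Rightarrow> 'x) \<Rightarrow> 'x \<Rightarrow> 'v" where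
  "psi_seq a s x = (SUP N. INF n\<in>{N..}. a x (s n))"

definition vclosure :: "('v::complete_lattice \<Rightarrow> 'v \<Rightarrow> 'v) \<Rightarrow> 'v \<Rightarrow> 'x set \<Rightarrow> ('x \<Rightarrow> 'x \<Rightarrow> 'v) \<Rightarrow> 'x set \<Rightarrow> 'x set" where
  "vclosure t k X a M = {x\<in>X. k \<le> (SUP y\<in>M. t (a x y) (a y x))}"

definition converges_to :: "('v::complete_lattice \<Rightarrow> 'v \<Rightarrow> 'v) \<Rightarrow> 'v \<Rightarrow> 'x set \<Rightarrow> ('x \<Rightarrow> 'x \<Rightarrow> 'v) \<Rightarrow> (nat \<Rightarrow> 'x) \<Rightarrow> 'x \<Rightarrow> bool" where
  "converges_to t k X a s x \<longleftrightarrow> (\<forall>M. infinite M \<longrightarrow> x \<in> vclosure t k X a (s ` M))"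

end

theory Submission
  imports Defs "HOL-Library.Infinite_Set"
begin

text \<open>Because k = \<top>, an element totally below \<top> lies below \<open>\<phi> y \<otimes> \<psi> y\<close> for some y.
  Choosing such points s n for the increasing sequence u n, which approximates \<top> from below,
  gives u n \<le> \<phi> (s n) and u n \<le> \<psi> (s n); the adjunction inequality \<open>\<psi> x \<otimes> \<phi> y \<le> a x y\<close>
  then makes s Cauchy and forces \<open>\<phi> = \<phi>\<^sub>s\<close>, \<open>\<psi> = \<psi>\<^sub>s\<close>. Conversely \<open>\<phi>\<^sub>s \<stileturn> \<psi>\<^sub>s\<close> for every
  Cauchy sequence s, and \<open>\<phi>\<^sub>s = x\<^sub>*\<close> holds exactly when s converges to x.\<close>

lemma psi_seq_eq_phi_seq_dual: "psi_seq a s = phi_seq (\<lambda>x y. a y x) s"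
  unfolding psi_seq_def phi_seq_def ..

locale integral_quantale =
  fixes t :: "'v::complete_lattice \<Rightarrow> 'v \<Rightarrow> 'v"
  assumes quantale: "quantale t top"
begin

lemma tensor_commute: "t u v = t v u"
  using quantale unfolding quantale_def by blast

lemma tensor_top_left [simp]: "t top v = v"
  using quantale unfolding quantale_def by blast

lemma tensor_top_right [simp]: "t v top = v"
  using tensor_commute tensor_top_left by metis

lemma tensor_SUP_right: "t u (SUP i\<in>I. f i) = (SUP i\<in>I. t u (f i))"
  using quantale unfolding quantale_def by (simp add: image_image)

lemma tensor_SUP_left: "t (SUP i\<in>I. f i) v = (SUP i\<in>I. t (f i) v)"
  using tensor_SUP_right[of v f I] tensor_commute by simp

lemma tensor_mono_right:
  assumes "v \<le> w" shows "t u v \<le> t u w"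
proof -
  have "t u w = sup (t u v) (t u w)"
    using tensor_SUP_right[of u id "{v, w}"] assms by (simp add: sup_absorb2)
  then show ?thesis by (simp add: le_iff_sup)
qed

lemma tensor_mono: "u \<le> u' \<Longrightarrow> v \<le> v' \<Longrightarrow> t u v \<le> t u' v'"
  by (metis tensor_mono_right tensor_commute order_trans)

lemma tensor_le_left: "t u v \<le> u"
  using tensor_mono_right[of v top u] by simp

lemma tensor_le_right: "t u v \<le> v"
  using tensor_le_left tensor_commute by metis

lemma SUP_tensor_self_eq_top:
  fixes c :: "nat \<Rightarrow> 'v"
  assumes "mono c" and "(SUP n. c n) = top"
  shows "(SUP n. t (c n) (c n)) = top"
proof -
  have "top = t (SUP n. c n) (SUP m. c m)"
    using assms(2) by simp
  also have "\<dots> = (SUP n. SUP m. t (c n) (c m))"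
    by (simp only: tensor_SUP_left) (simp only: tensor_SUP_right)
  also have "\<dots> \<le> (SUP n. t (c n) (c n))"
  proof (intro SUP_least)
    fix n m
    have "t (c n) (c m) \<le> t (c (max n m)) (c (max n m))"
      by (intro tensor_mono monoD[OF assms(1)]) simp_all
    also have "\<dots> \<le> (SUP n. t (c n) (c n))" by (rule SUP_upper) simp
    finally show "t (c n) (c m) \<le> (SUP n. t (c n) (c n))" .
  qed
  finally show ?thesis by (simp add: top_le)
qed


lemma approximating_point:
  assumes "adjoint t top X a phi psi" and "totally_below w top"
  obtains y where "y \<in> X" "w \<le> phi y" "w \<le> psi y"
proof -
  have "top \<le> Sup ((\<lambda>y. t (phi y) (psi y)) ` X)"
    using assms(1) unfolding adjoint_def by blast
  then obtain y where "y \<in> X" "w \<le> t (phi y) (psi y)"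
    using assms(2) unfolding totally_below_def by blast
  then show ?thesis
    using that tensor_le_left tensor_le_right order_trans by metis
qed

lemma is_cauchy_of_approximating:
  assumes "mono u" and "(SUP n. u n) = top"
    and phi: "\<And>n. u n \<le> phi (s n)" and psi: "\<And>n. u n \<le> psi (s n)"
    and adj: "\<And>m n. t (psi (s m)) (phi (s n)) \<le> a (s m) (s n)"
  shows "is_cauchy top a s"
  unfolding is_cauchy_def cauchy_val_def
proof -
  have "top = (SUP N. t (u N) (u N))"
    using SUP_tensor_self_eq_top[OF assms(1,2)] by simp
  also have "\<dots> \<le> (SUP N. INF p\<in>{(n, m). N \<le> n \<and> N \<le> m}. a (s (fst p)) (s (snd p)))"
  proof (intro SUP_mono' INF_greatest)
    fix N :: nat and p assume "p \<in> {(n, m). N \<le> n \<and> N \<le> m}"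
    then obtain n m where p: "p = (n, m)" "N \<le> n" "N \<le> m" by auto
    have "t (u N) (u N) \<le> t (psi (s n)) (phi (s m))"
      using tensor_mono monoD[OF assms(1)] p phi psi order_trans by metis
    also have "\<dots> \<le> a (s n) (s m)" by (rule adj)
    finally show "t (u N) (u N) \<le> a (s (fst p)) (s (snd p))" using p by simp
  qed
  finally show "top \<le> (SUP N. INF p\<in>{(n, m). N \<le> n \<and> N \<le> m}. a (s (fst p)) (s (snd p)))" .
qed

lemma phi_seq_eq_of_approximating:
  assumes "mono u" and u_top: "(SUP n. u n) = top"
    and phi: "\<And>n. u n \<le> phi (s n)" and psi: "\<And>n. u n \<le> psi (s n)"
    and adj: "\<And>n. t (psi (s n)) (phi x) \<le> a (s n) x"
    and module: "\<And>n. t (phi (s n)) (a (s n) x) \<le> phi x"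
  shows "phi_seq a s x = phi x"
proof (rule antisym)
  show "phi_seq a s x \<le> phi x" unfolding phi_seq_def
  proof (rule SUP_least)
    fix N
    let ?c = "INF n\<in>{N..}. a (s n) x"
    have "?c = (SUP m. t (u m) ?c)"
      using u_top tensor_SUP_left[of u UNIV ?c] by simp
    also have "\<dots> \<le> phi x"
    proof (rule SUP_least)
      fix m
      have "u m \<le> phi (s (max m N))"
        using order_trans[OF monoD[OF assms(1), of m "max m N"] phi] by simp
      then have "t (u m) ?c \<le> t (phi (s (max m N))) (a (s (max m N)) x)"
        by (intro tensor_mono INF_lower) simp_all
      also have "\<dots> \<le> phi x" by (rule module)
      finally show "t (u m) ?c \<le> phi x" .
    qed
    finally show "?c \<le> phi x" .
  qed
  have "phi x = (SUP N. t (u N) (phi x))"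
    using u_top tensor_SUP_left[of u UNIV "phi x"] by simp
  also have "\<dots> \<le> phi_seq a s x" unfolding phi_seq_def
  proof (intro SUP_mono' INF_greatest)
    fix N n :: nat assume "n \<in> {N..}"
    then have "u N \<le> psi (s n)"
      using monoD[OF assms(1)] psi order_trans by fastforce
    then have "t (u N) (phi x) \<le> t (psi (s n)) (phi x)" by (rule tensor_mono) simp
    also have "\<dots> \<le> a (s n) x" by (rule adj)
    finally show "t (u N) (phi x) \<le> a (s n) x" .
  qed
  finally show "phi x \<le> phi_seq a s x" .
qed

lemma adjoint_eq_seq:
  fixes u :: "nat \<Rightarrow> 'v"
  assumes "mono u" and "(SUP n. u n) = top" and "\<forall>n. totally_below (u n) top"
    and adj: "adjoint t top X a phi psi"
  obtains s where "range s \<subseteq> X" "is_cauchy top a s"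
    "\<forall>x\<in>X. phi x = phi_seq a s x" "\<forall>x\<in>X. psi x = psi_seq a s x"
proof -
  have module_phi: "\<forall>y\<in>X. \<forall>y'\<in>X. t (phi y) (a y y') \<le> phi y'"
    and module_psi: "\<forall>x\<in>X. \<forall>x'\<in>X. t (a x x') (psi x') \<le> psi x"
    and counit: "\<forall>x\<in>X. \<forall>y\<in>X. t (psi x) (phi y) \<le> a x y"
    using adj unfolding adjoint_def module_from_E_def module_to_E_def by auto
  have "\<forall>n. \<exists>y\<in>X. u n \<le> phi y \<and> u n \<le> psi y"
    using approximating_point[OF adj] assms(3) by metis
  then obtain s where sX: "\<And>n. s n \<in> X"
    and phi: "\<And>n. u n \<le> phi (s n)" and psi: "\<And>n. u n \<le> psi (s n)"
    by metis
  have "phi_seq a s x = phi x" if "x \<in> X" for x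
    using phi_seq_eq_of_approximating[where phi = phi and psi = psi, OF assms(1,2) phi psi]
      module_phi counit sX that
    by blast
  moreover have "psi_seq a s x = psi x" if "x \<in> X" for x
    unfolding psi_seq_eq_phi_seq_dual
    using phi_seq_eq_of_approximating[where phi = psi and psi = phi and a = "\<lambda>x y. a y x",
          OF assms(1,2) psi phi] module_psi counit sX that
    by (metis tensor_commute)
  moreover have "is_cauchy top a s"
    using is_cauchy_of_approximating[where phi = phi and psi = psi, OF assms(1,2) phi psi]
      counit sX
    by blast
  ultimately show ?thesis
    using that sX by (metis image_subsetI)
qed

end

definition cauchy_tail :: "('x \<Rightarrow> 'x \<Rightarrow> 'v::complete_lattice) \<Rightarrow> (nat \<Rightarrow> 'x) \<Rightarrow> nat \<Rightarrow> 'v" where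
  "cauchy_tail a s N = (INF p\<in>{(n, m). N \<le> n \<and> N \<le> m}. a (s (fst p)) (s (snd p)))"

lemma mono_cauchy_tail: "mono (cauchy_tail a s)"
  unfolding cauchy_tail_def by (rule monoI, rule INF_superset_mono) auto

lemma is_cauchy_top_iff: "is_cauchy top a s \<longleftrightarrow> (SUP N. cauchy_tail a s N) = top"
  unfolding is_cauchy_def cauchy_val_def cauchy_tail_def by (simp add: top_unique)

lemma cauchy_tail_le: "N \<le> n \<Longrightarrow> N \<le> m \<Longrightarrow> cauchy_tail a s N \<le> a (s n) (s m)"
  unfolding cauchy_tail_def by (rule INF_lower2[of "(n, m)"]) auto

lemma cauchy_tail_le_phi_seq: "cauchy_tail a s n \<le> phi_seq a s (s n)"
  unfolding phi_seq_def
  by (rule SUP_upper2[of n], simp, rule INF_greatest, rule cauchy_tail_le) auto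

lemma cauchy_tail_le_psi_seq: "cauchy_tail a s n \<le> psi_seq a s (s n)"
  unfolding psi_seq_def
  by (rule SUP_upper2[of n], simp, rule INF_greatest, rule cauchy_tail_le) auto

lemma converges_to_iff:
  "converges_to t k X a s x \<longleftrightarrow>
     x \<in> X \<and> (\<forall>M. infinite M \<longrightarrow> k \<le> (SUP n\<in>M. t (a x (s n)) (a (s n) x)))"
  unfolding converges_to_def vclosure_def using infinite_UNIV_nat by (auto simp: image_image)

context integral_quantale
begin

lemma vcat_dual:
  assumes "vcat t top X a"
  shows "vcat t top X (\<lambda>x y. a y x)"
  unfolding vcat_def
proof (intro conjI ballI)
  fix x y z assume "x \<in> X" "y \<in> X" "z \<in> X"
  then have "t (a z y) (a y x) \<le> a z x" using assms unfolding vcat_def by blast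
  then show "t (a y x) (a z y) \<le> a z x" by (simp add: tensor_commute[of "a y x"])
qed (use assms in \<open>simp add: vcat_def\<close>)

lemma SUP_cauchy_tail_tensor_self:
  assumes "is_cauchy top a s"
  shows "(SUP N. t (cauchy_tail a s N) (cauchy_tail a s N)) = top"
  using SUP_tensor_self_eq_top[OF mono_cauchy_tail] assms unfolding is_cauchy_top_iff .

lemma phi_seq_tensor_le:
  assumes "vcat t top X a" and "range s \<subseteq> X" and y: "y \<in> X" and y': "y' \<in> X"
  shows "t (phi_seq a s y) (a y y') \<le> phi_seq a s y'"
proof -
  have trans: "t (a (s n) y) (a y y') \<le> a (s n) y'" for n
    using assms unfolding vcat_def by blast
  have "t (phi_seq a s y) (a y y') = (SUP N. t (INF n\<in>{N..}. a (s n) y) (a y y'))"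
    unfolding phi_seq_def by (rule tensor_SUP_left)
  also have "\<dots> \<le> phi_seq a s y'" unfolding phi_seq_def
  proof (intro SUP_mono' INF_greatest)
    fix N n :: nat assume "n \<in> {N..}"
    then have "t (INF n\<in>{N..}. a (s n) y) (a y y') \<le> t (a (s n) y) (a y y')"
      by (intro tensor_mono INF_lower) auto
    also have "\<dots> \<le> a (s n) y'" by (rule trans)
    finally show "t (INF n\<in>{N..}. a (s n) y) (a y y') \<le> a (s n) y'" .
  qed
  finally show ?thesis .
qed

lemma psi_seq_tensor_phi_seq_le:
  assumes "vcat t top X a" and "range s \<subseteq> X" and "x \<in> X" and "y \<in> X"
  shows "t (psi_seq a s x) (phi_seq a s y) \<le> a x y"
proof -
  have trans: "t (a x (s n)) (a (s n) y) \<le> a x y" for n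
    using assms unfolding vcat_def by blast
  have "t (psi_seq a s x) (phi_seq a s y) =
      (SUP N. SUP M. t (INF n\<in>{N..}. a x (s n)) (INF n\<in>{M..}. a (s n) y))"
    unfolding psi_seq_def phi_seq_def
    by (simp only: tensor_SUP_left) (simp only: tensor_SUP_right)
  also have "\<dots> \<le> a x y"
  proof (intro SUP_least)
    fix N M :: nat
    have "t (INF n\<in>{N..}. a x (s n)) (INF n\<in>{M..}. a (s n) y)
        \<le> t (a x (s (max N M))) (a (s (max N M)) y)"
      by (intro tensor_mono INF_lower) auto
    also have "\<dots> \<le> a x y" by (rule trans)
    finally show "t (INF n\<in>{N..}. a x (s n)) (INF n\<in>{M..}. a (s n) y) \<le> a x y" .
  qed
  finally show ?thesis .
qed

lemma adjoint_seq:
  assumes V: "vcat t top X a" and sX: "range s \<subseteq> X" and "is_cauchy top a s"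
  shows "adjoint t top X a (phi_seq a s) (psi_seq a s)"
proof -
  have module_psi: "t (a x x') (psi_seq a s x') \<le> psi_seq a s x" if "x \<in> X" "x' \<in> X" for x x'
    using phi_seq_tensor_le[OF vcat_dual[OF V] sX that(2,1)]
    unfolding psi_seq_eq_phi_seq_dual by (simp add: tensor_commute[of "a x x'"])
  have "top = (SUP N. t (cauchy_tail a s N) (cauchy_tail a s N))"
    using SUP_cauchy_tail_tensor_self[OF assms(3)] by simp
  also have "\<dots> \<le> (SUP y\<in>X. t (phi_seq a s y) (psi_seq a s y))"
  proof (rule SUP_mono)
    fix N
    show "\<exists>y\<in>X. t (cauchy_tail a s N) (cauchy_tail a s N) \<le> t (phi_seq a s y) (psi_seq a s y)"
      using sX by (intro bexI[of _ "s N"] tensor_mono cauchy_tail_le_phi_seq cauchy_tail_le_psi_seq) auto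
  qed
  finally show ?thesis
    unfolding adjoint_def module_from_E_def module_to_E_def
    using phi_seq_tensor_le[OF V sX] module_psi psi_seq_tensor_phi_seq_le[OF V sX] by simp
qed

lemma converges_of_phi_seq_representable:
  assumes V: "vcat t top X a" and sX: "range s \<subseteq> X" and "is_cauchy top a s"
    and x: "x \<in> X" and rep: "\<forall>y\<in>X. phi_seq a s y = a x y"
  shows "converges_to t top X a s x"
  unfolding converges_to_iff
proof (intro conjI allI impI x)
  fix M :: "nat set" assume "infinite M"
  have "a x x = top" using V x unfolding vcat_def by (simp add: top_le)
  then have psi_le: "psi_seq a s y \<le> a y x" if "y \<in> X" for y
    using psi_seq_tensor_phi_seq_le[OF V sX that x] rep x by simp
  have "top = (SUP N. t (cauchy_tail a s N) (cauchy_tail a s N))"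
    using SUP_cauchy_tail_tensor_self[OF assms(3)] by simp
  also have "\<dots> \<le> (SUP n\<in>M. t (a x (s n)) (a (s n) x))"
  proof (rule SUP_mono)
    fix N
    obtain n where n: "n \<in> M" "N \<le> n"
      using \<open>infinite M\<close> unfolding infinite_nat_iff_unbounded_le by blast
    have "t (cauchy_tail a s N) (cauchy_tail a s N) \<le> t (cauchy_tail a s n) (cauchy_tail a s n)"
      using tensor_mono monoD[OF mono_cauchy_tail n(2)] by blast
    also have "\<dots> \<le> t (a x (s n)) (a (s n) x)"
    proof (rule tensor_mono)
      have "s n \<in> X" using sX by auto
      then show "cauchy_tail a s n \<le> a x (s n)"
        using cauchy_tail_le_phi_seq[of a s n] rep by simp
      show "cauchy_tail a s n \<le> a (s n) x"
        using cauchy_tail_le_psi_seq[of a s n] psi_le[OF \<open>s n \<in> X\<close>] by (rule order_trans)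
    qed
    finally show "\<exists>m\<in>M. t (cauchy_tail a s N) (cauchy_tail a s N) \<le> t (a x (s m)) (a (s m) x)"
      using n by blast
  qed
  finally show "top \<le> (SUP n\<in>M. t (a x (s n)) (a (s n) x))" .
qed


lemma top_le_phi_seq_of_converges:
  assumes V: "vcat t top X a" and sX: "range s \<subseteq> X" and "is_cauchy top a s"
    and conv: "converges_to t top X a s x"
  shows "top \<le> phi_seq a s x"
proof -
  have x: "x \<in> X"
    and tail: "\<And>N. top \<le> (SUP n\<in>{N..}. t (a x (s n)) (a (s n) x))"
    using conv infinite_Ici unfolding converges_to_iff by blast+
  have "cauchy_tail a s N \<le> (INF m\<in>{N..}. a (s m) x)" for N
  proof (rule INF_greatest)
    fix m assume m: "m \<in> {N..}"
    have "top \<le> (SUP n\<in>{N..}. a (s n) x)"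
      using order_trans[OF tail SUP_mono'[OF tensor_le_right]] .
    then have "cauchy_tail a s N \<le> t (cauchy_tail a s N) (SUP n\<in>{N..}. a (s n) x)"
      using tensor_mono[of "cauchy_tail a s N" "cauchy_tail a s N" top] by simp
    also have "\<dots> = (SUP n\<in>{N..}. t (cauchy_tail a s N) (a (s n) x))"
      by (rule tensor_SUP_right)
    also have "\<dots> \<le> a (s m) x"
    proof (rule SUP_least)
      fix n assume "n \<in> {N..}"
      then have "t (cauchy_tail a s N) (a (s n) x) \<le> t (a (s m) (s n)) (a (s n) x)"
        using m by (intro tensor_mono cauchy_tail_le) auto
      also have "\<dots> \<le> a (s m) x" using V sX x unfolding vcat_def by blast
      finally show "t (cauchy_tail a s N) (a (s n) x) \<le> a (s m) x" .
    qed
    finally show "cauchy_tail a s N \<le> a (s m) x" .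
  qed
  then have "(SUP N. cauchy_tail a s N) \<le> phi_seq a s x"
    unfolding phi_seq_def by (rule SUP_mono')
  then show ?thesis using assms(3) unfolding is_cauchy_top_iff by simp
qed

lemma phi_seq_representable_of_converges:
  assumes V: "vcat t top X a" and sX: "range s \<subseteq> X" and "is_cauchy top a s"
    and conv: "converges_to t top X a s x" and y: "y \<in> X"
  shows "phi_seq a s y = a x y"
proof (rule antisym)
  have x: "x \<in> X"
    and tail: "\<And>N. top \<le> (SUP n\<in>{N..}. t (a x (s n)) (a (s n) x))"
    using conv infinite_Ici unfolding converges_to_iff by blast+
  show "phi_seq a s y \<le> a x y" unfolding phi_seq_def
  proof (rule SUP_least)
    fix N
    let ?d = "INF n\<in>{N..}. a (s n) y"
    have "?d \<le> t (SUP n\<in>{N..}. t (a x (s n)) (a (s n) x)) ?d"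
      using tensor_mono[OF tail[of N], of ?d ?d] by simp
    also have "\<dots> = (SUP n\<in>{N..}. t (t (a x (s n)) (a (s n) x)) ?d)"
      by (rule tensor_SUP_left)
    also have "\<dots> \<le> a x y"
    proof (rule SUP_least)
      fix n assume "n \<in> {N..}"
      then have "t (t (a x (s n)) (a (s n) x)) ?d \<le> t (a x (s n)) (a (s n) y)"
        by (intro tensor_mono tensor_le_left INF_lower)
      also have "\<dots> \<le> a x y" using V sX x y unfolding vcat_def by blast
      finally show "t (t (a x (s n)) (a (s n) x)) ?d \<le> a x y" .
    qed
    finally show "?d \<le> a x y" .
  qed
  have "a x y \<le> t (phi_seq a s x) (a x y)"
    using tensor_mono[OF top_le_phi_seq_of_converges[OF assms(1-4)], of "a x y" "a x y"] by simp
  also have "\<dots> \<le> phi_seq a s y" by (rule phi_seq_tensor_le[OF V sX x y])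
  finally show "a x y \<le> phi_seq a s y" .
qed

lemma cauchy_complete_iff_cauchy_seqs_converge:
  fixes u :: "nat \<Rightarrow> 'v"
  assumes "mono u" and "(SUP n. u n) = top" and "\<forall>n. totally_below (u n) top"
    and V: "vcat t top X a"
  shows "cauchy_complete t top X a \<longleftrightarrow>
    (\<forall>s. range s \<subseteq> X \<longrightarrow> is_cauchy top a s \<longrightarrow> (\<exists>x\<in>X. converges_to t top X a s x))"
proof (intro iffI allI impI)
  fix s assume "cauchy_complete t top X a" "range s \<subseteq> X" "is_cauchy top a s"
  then obtain x where "x \<in> X" "\<forall>y\<in>X. phi_seq a s y = a x y"
    using adjoint_seq[OF V] unfolding cauchy_complete_def by blast
  then show "\<exists>x\<in>X. converges_to t top X a s x"
    using converges_of_phi_seq_representable[OF V \<open>range s \<subseteq> X\<close> \<open>is_cauchy top a s\<close>]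
    by blast
next
  assume converge:
    "\<forall>s. range s \<subseteq> X \<longrightarrow> is_cauchy top a s \<longrightarrow> (\<exists>x\<in>X. converges_to t top X a s x)"
  show "cauchy_complete t top X a" unfolding cauchy_complete_def
  proof (intro allI impI)
    fix phi assume "\<exists>psi. adjoint t top X a phi psi"
    then obtain psi where "adjoint t top X a phi psi" by blast
    then obtain s where s: "range s \<subseteq> X" "is_cauchy top a s" "\<forall>y\<in>X. phi y = phi_seq a s y"
      using adjoint_eq_seq[OF assms(1-3)] by metis
    then obtain x where "x \<in> X" "converges_to t top X a s x" using converge by blast
    then show "\<exists>x\<in>X. \<forall>y\<in>X. phi y = a x y"
      using phi_seq_representable_of_converges[OF V s(1,2)] s(3) by metis
  qed
qed

end

theorem theorem3p19:
  fixes t :: "'v::complete_lattice \<Rightarrow> 'v \<Rightarrow> 'v" and k :: 'v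
    and u :: "nat \<Rightarrow> 'v" and X :: "'x set" and a :: "'x \<Rightarrow> 'x \<Rightarrow> 'v"
  assumes "quantale t k" and "k = top"
    and "(SUP n. u n) = k" and "\<forall>n. totally_below (u n) k" and "\<forall>n. u n \<le> u (Suc n)"
    and "vcat t k X a"
  shows "(\<forall>phi psi. adjoint t k X a phi psi \<longrightarrow>
            (\<exists>s. range s \<subseteq> X \<and> is_cauchy k a s \<and>
                 (\<forall>x\<in>X. phi x = phi_seq a s x) \<and> (\<forall>x\<in>X. psi x = psi_seq a s x)))
       \<and> (cauchy_complete t k X a \<longleftrightarrow>
            (\<forall>s. range s \<subseteq> X \<longrightarrow> is_cauchy k a s \<longrightarrow> (\<exists>x\<in>X. converges_to t k X a s x)))"
proof -
  interpret integral_quantale t using assms(1,2) by unfold_locales simp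
  have "mono u" using assms(5) by (simp add: mono_iff_le_Suc)
  note approx = this assms(3,4)[unfolded assms(2)]
  show ?thesis
    using adjoint_eq_seq[OF approx]
      cauchy_complete_iff_cauchy_seqs_converge[OF approx assms(6)[unfolded assms(2)]]
    unfolding assms(2) by metis
qed

end
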